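(* Let $(E,\mathcal{D},\rho)$ be a U-matroid and let $a\in E$ with $\{a\}\notin\mathcal{D}$. Then $(E,\mathcal{D}[a],\rho_a)$ is a U-matroid (and hence a lattice extension of $(E,\mathcal{D},\rho)$), where $\rho_a$ is the generous atom extension of $\rho$ to $\mathcal{D}[a]$.
   Context: An accessible distributive lattice on a finite set $E$ is a family $\mathcal{D}\subseteq 2^E$ containing $\emptyset$ and $E$, closed under union and intersection, such that every nonempty $A\in\mathcal{D}$ contains some $x$ with $A\setminus\{x\}\in\mathcal{D}$. A U-matroid is a triple $(E,\mathcal{D},\rho)$ with $\mathcal{D}$ an accessible distributive lattice and $\rho:\mathcal{D}\to\mathbb{N}$ satisfying $\rho(\emptyset)=0$; $\rho(A)\le\rho(B)$ whenever $A\subseteq B$; $\rho(A)+\rho(B)\ge\rho(A\cup B)+\rho(A\cap B)$; and $\rho(A\cup\{e\})-\rho(A)\le1$ whenever $A,A\cup\{e\}\in\mathcal{D}$. For $S\subseteq E$, $\sup_\mathcal{D}(S)=\bigcap\{B\in\mathcal{D}:B\supseteq S\}$. For $a\in E$ with $\{a\}\notin\mathcal{D}$, let $\mathcal{D}[a]=\mathcal{D}\cup\{S\cup\{a\}:S\in\mathcal{D}\}$. The generous atom extension $\rho_a:\mathcal{D}[a]\to\mathbb{N}$ is: $\rho_a(S)=\rho(S)$ if $S\in\mathcal{D}$; if $S\notin\mathcal{D}$ (so $S\setminus\{a\}\in\mathcal{D}$), $\rho_a(S)=\rho(S\setminus\{a\})$ when $\rho(S\setminus\{a\})=\rho(\sup_\mathcal{D}(S))$,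 and $\rho_a(S)=\rho(S\setminus\{a\})+1$ when $\rho(S\setminus\{a\})<\rho(\sup_\mathcal{D}(S))$. A lattice extension of $(E,\mathcal{D},\rho)$ is a U-matroid $(E,\mathcal{D}',\rho')$ with $\mathcal{D}\subseteq\mathcal{D}'$ and $\rho'|_\mathcal{D}=\rho$. *)

theory Defs
  imports Main
begin

definition accessible_distributive_lattice :: "'a set \<Rightarrow> 'a set set \<Rightarrow> bool" where
  "accessible_distributive_lattice E D \<longleftrightarrow>
     finite E \<and> D \<subseteq> Pow E \<and> {} \<in> D \<and> E \<in> D \<and>
     (\<forall>A\<in>D. \<forall>B\<in>D. A \<union> B \<in> D \<and> A \<inter> B \<in> D) \<and>
     (\<forall>A\<in>D. A \<noteq> {} \<longrightarrow> (\<exists>x\<in>A. A - {x} \<in> D))"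

definition U_matroid :: "'a set \<Rightarrow> 'a set set \<Rightarrow> ('a set \<Rightarrow> nat) \<Rightarrow> bool" where
  "U_matroid E D \<rho> \<longleftrightarrow>
     accessible_distributive_lattice E D \<and>
     \<rho> {} = 0 \<and>
     (\<forall>A\<in>D. \<forall>B\<in>D. A \<subseteq> B \<longrightarrow> \<rho> A \<le> \<rho> B) \<and>
     (\<forall>A\<in>D. \<forall>B\<in>D. \<rho> A + \<rho> B \<ge> \<rho> (A \<union> B) + \<rho> (A \<inter> B)) \<and>
     (\<forall>A\<in>D. \<forall>e. A \<union> {e} \<in> D \<longrightarrow> \<rho> (A \<union> {e}) \<le> \<rho> A + 1)"

definition sup_D :: "'a set set \<Rightarrow> 'a set \<Rightarrow> 'a set" where
  "sup_D D S = \<Inter> {B \<in> D. S \<subseteq> B}"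

definition lattice_add_atom :: "'a set set \<Rightarrow> 'a \<Rightarrow> 'a set set" where
  "lattice_add_atom D a = D \<union> {S \<union> {a} | S. S \<in> D}"

definition generous_atom_ext :: "'a set set \<Rightarrow> ('a set \<Rightarrow> nat) \<Rightarrow> 'a \<Rightarrow> 'a set \<Rightarrow> nat" where
  "generous_atom_ext D \<rho> a S =
     (if S \<in> D then \<rho> S
      else if \<rho> (S - {a}) = \<rho> (sup_D D S) then \<rho> (S - {a})
      else \<rho> (S - {a}) + 1)"

definition lattice_extension ::
  "'a set \<Rightarrow> 'a set set \<Rightarrow> ('a set \<Rightarrow> nat) \<Rightarrow> 'a set set \<Rightarrow> ('a set \<Rightarrow> nat) \<Rightarrow> bool" where
  "lattice_extension E D \<rho> D' \<rho>' \<longleftrightarrow>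
     U_matroid E D' \<rho>' \<and> D \<subseteq> D' \<and> (\<forall>A\<in>D. \<rho>' A = \<rho> A)"

end

(* On D[a] the generous atom extension coincides with

     X |-> min over Y in D of  rho Y + |X - Y|,

   which extends rho (accessibility gives rho (S Un T) <= rho S + |T - S|, adding the elements
   of T - S one at a time) and is a U-matroid rank on every accessible distributive lattice of
   subsets of E: monotonicity and the unit-increase axiom hold termwise, and submodularity
   follows by combining minimisers Y, Z for A, B into Y Un Z and Y Int Z. For X = S + a with
   X not in D, the minimum over the Y containing a is rho (sup X), attained at sup X, and over
   the Y avoiding a it is rho S + 1, attained at S; the generous extension picks the smaller. *)

theory Submission
  imports Defs
begin

definition min_conv_card :: "'a set set \<Rightarrow> ('a set \<Rightarrow> nat) \<Rightarrow> 'a set \<Rightarrow> nat" where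
  "min_conv_card D \<rho> X = Min ((\<lambda>Y. \<rho> Y + card (X - Y)) ` D)"

lemma card_Diff_Un_plus_card_Diff_Int_le:
  assumes "finite A" "finite B"
  shows "card (A \<union> B - (Y \<union> Z)) + card (A \<inter> B - (Y \<inter> Z)) \<le> card (A - Y) + card (B - Z)"
proof -
  let ?U = "A \<union> B - (Y \<union> Z)" and ?I = "A \<inter> B - (Y \<inter> Z)"
  have fin: "finite (A - Y)" "finite (B - Z)" "finite ?U" "finite ?I"
    using assms by auto
  have "card ?U + card ?I = card (?U \<union> ?I) + card (?U \<inter> ?I)"
    using fin(3,4) by (rule card_Un_Int)
  also have "\<dots> \<le> card ((A - Y) \<union> (B - Z)) + card ((A - Y) \<inter> (B - Z))"
  proof (rule add_mono)
    show "card (?U \<union> ?I) \<le> card ((A - Y) \<union> (B - Z))"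
      using fin(1,2) by (intro card_mono) blast+
    show "card (?U \<inter> ?I) \<le> card ((A - Y) \<inter> (B - Z))"
      using fin(1,2) by (intro card_mono) blast+
  qed
  also have "\<dots> = card (A - Y) + card (B - Z)"
    using fin(1,2) by (rule card_Un_Int[symmetric])
  finally show ?thesis .
qed

lemma U_matroid_cong:
  assumes "U_matroid E D f" "\<And>X. X \<in> D \<Longrightarrow> g X = f X"
  shows "U_matroid E D g"
proof -
  have "{} \<in> D" "\<And>A B. A \<in> D \<Longrightarrow> B \<in> D \<Longrightarrow> A \<union> B \<in> D \<and> A \<inter> B \<in> D"
    using assms(1) by (simp_all add: U_matroid_def accessible_distributive_lattice_def)
  with assms show ?thesis
    unfolding U_matroid_def by (simp add: Ball_def)
qed

lemma mem_lattice_add_atom_iff: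
  "X \<in> lattice_add_atom D a \<longleftrightarrow> (\<exists>S\<in>D. S \<subseteq> X \<and> X \<subseteq> insert a S)"
proof
  assume "\<exists>S\<in>D. S \<subseteq> X \<and> X \<subseteq> insert a S"
  then obtain S where "S \<in> D" "S \<subseteq> X" "X \<subseteq> insert a S" by blast
  then have "X = S \<or> X = S \<union> {a}" by (cases "a \<in> X") auto
  then show "X \<in> lattice_add_atom D a"
    using \<open>S \<in> D\<close> unfolding lattice_add_atom_def by blast
qed (auto simp: lattice_add_atom_def)

lemma accessible_distributive_lattice_add_atom:
  assumes L: "accessible_distributive_lattice E D" and "a \<in> E"
  shows "accessible_distributive_lattice E (lattice_add_atom D a)"
  unfolding accessible_distributive_lattice_def
proof (intro conjI ballI impI)
  let ?D = "lattice_add_atom D a"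
  have "D \<subseteq> ?D"
    unfolding lattice_add_atom_def by blast
  show "finite E" "{} \<in> ?D" "E \<in> ?D"
    using L \<open>D \<subseteq> ?D\<close> unfolding accessible_distributive_lattice_def by auto
  show "?D \<subseteq> Pow E"
    using L assms(2) unfolding accessible_distributive_lattice_def lattice_add_atom_def by auto
  have closed: "X \<union> Y \<in> ?D \<and> X \<inter> Y \<in> ?D" if XY: "X \<in> ?D" "Y \<in> ?D" for X Y
  proof -
    obtain S T where S: "S \<in> D" "S \<subseteq> X" "X \<subseteq> insert a S"
      and T: "T \<in> D" "T \<subseteq> Y" "Y \<subseteq> insert a T"
      using XY unfolding mem_lattice_add_atom_iff by blast
    have "S \<union> T \<in> D" "S \<inter> T \<in> D"
      using L S(1) T(1) unfolding accessible_distributive_lattice_def by blast+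
    moreover have "S \<union> T \<subseteq> X \<union> Y" "X \<union> Y \<subseteq> insert a (S \<union> T)"
      "S \<inter> T \<subseteq> X \<inter> Y" "X \<inter> Y \<subseteq> insert a (S \<inter> T)"
      using S T by auto
    ultimately show ?thesis
      unfolding mem_lattice_add_atom_iff by blast
  qed
  show "X \<union> Y \<in> ?D" "X \<inter> Y \<in> ?D" if "X \<in> ?D" "Y \<in> ?D" for X Y
    using closed[OF that] by simp_all
  show "\<exists>x\<in>X. X - {x} \<in> ?D" if "X \<in> ?D" "X \<noteq> {}" for X
  proof (cases "X \<in> D")
    case True
    then obtain x where "x \<in> X" "X - {x} \<in> D"
      using L \<open>X \<noteq> {}\<close> unfolding accessible_distributive_lattice_def by blast
    then show ?thesis
      using \<open>D \<subseteq> ?D\<close> by blast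
  next
    case False
    then obtain S where "S \<in> D" "X = insert a S"
      using \<open>X \<in> ?D\<close> unfolding lattice_add_atom_def by auto
    moreover have "a \<notin> S"
      using False calculation by (auto simp: insert_absorb)
    ultimately show ?thesis
      using \<open>D \<subseteq> ?D\<close> by (intro bexI[of _ a]) auto
  qed
qed

context
  fixes E :: "'a set" and D :: "'a set set" and \<rho> :: "'a set \<Rightarrow> nat"
  assumes U: "U_matroid E D \<rho>"
begin

lemma finite_ground: "finite E"
  and lattice_subset_Pow: "D \<subseteq> Pow E"
  and empty_in_lattice: "{} \<in> D"
  and ground_in_lattice: "E \<in> D"
  and lattice_Un: "A \<in> D \<Longrightarrow> B \<in> D \<Longrightarrow> A \<union> B \<in> D"
  and lattice_Int: "A \<in> D \<Longrightarrow> B \<in> D \<Longrightarrow> A \<inter> B \<in> D"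
  and lattice_accessible: "A \<in> D \<Longrightarrow> A \<noteq> {} \<Longrightarrow> \<exists>x\<in>A. A - {x} \<in> D"
  using U by (auto simp: U_matroid_def accessible_distributive_lattice_def)

lemma rank_empty: "\<rho> {} = 0"
  and rank_mono: "A \<in> D \<Longrightarrow> B \<in> D \<Longrightarrow> A \<subseteq> B \<Longrightarrow> \<rho> A \<le> \<rho> B"
  and rank_submodular: "A \<in> D \<Longrightarrow> B \<in> D \<Longrightarrow> \<rho> (A \<union> B) + \<rho> (A \<inter> B) \<le> \<rho> A + \<rho> B"
  and rank_Un_singleton_le: "A \<in> D \<Longrightarrow> A \<union> {e} \<in> D \<Longrightarrow> \<rho> (A \<union> {e}) \<le> \<rho> A + 1"
  using U by (auto simp: U_matroid_def)

lemma finite_lattice: "finite D"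
  using lattice_subset_Pow finite_ground by (meson finite_Pow_iff finite_subset)

lemma finite_lattice_member: "A \<in> D \<Longrightarrow> finite A"
  using lattice_subset_Pow finite_ground by (meson PowD finite_subset subsetD)

lemma sup_D_in_lattice:
  assumes "S \<subseteq> E"
  shows "sup_D D S \<in> D"
proof -
  have Inter_closed: "\<Inter> F \<in> D" if "finite F" "F \<noteq> {}" "F \<subseteq> D" for F
    using that by (induction F rule: finite_ne_induct) (auto intro: lattice_Int)
  have "E \<in> {B \<in> D. S \<subseteq> B}"
    using ground_in_lattice assms by simp
  then show ?thesis
    unfolding sup_D_def using finite_lattice by (intro Inter_closed) auto
qed

lemma sup_D_least: "B \<in> D \<Longrightarrow> S \<subseteq> B \<Longrightarrow> sup_D D S \<subseteq> B"
  unfolding sup_D_def by auto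

lemma subset_sup_D: "S \<subseteq> sup_D D S"
  unfolding sup_D_def by auto

lemma rank_Un_le_card_Diff:
  assumes "S \<in> D" "T \<in> D"
  shows "\<rho> (S \<union> T) \<le> \<rho> S + card (T - S)"
  using assms(2)
proof (induction "card T" arbitrary: T rule: less_induct)
  case less
  show ?case
  proof (cases "T = {}")
    case False
    then obtain x where x: "x \<in> T" "T - {x} \<in> D"
      using lattice_accessible less.prems by blast
    have "finite T"
      using finite_lattice_member less.prems by blast
    then have IH: "\<rho> (S \<union> (T - {x})) \<le> \<rho> S + card (T - {x} - S)"
      using less x by (meson card_Diff1_less)
    show ?thesis
    proof (cases "x \<in> S")
      case True
      then have "S \<union> T = S \<union> (T - {x})" "T - S = T - {x} - S" by auto
      then show ?thesis using IH by simp
    next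
      case False
      have "S \<union> T = (S \<union> (T - {x})) \<union> {x}" using x by auto
      then have "\<rho> (S \<union> T) \<le> \<rho> (S \<union> (T - {x})) + 1"
        using rank_Un_singleton_le lattice_Un assms(1) less.prems x by metis
      moreover have "T - S = insert x (T - {x} - S)" using x False by auto
      ultimately show ?thesis using IH \<open>finite T\<close> by simp
    qed
  qed simp
qed

lemma min_conv_card_le: "Y \<in> D \<Longrightarrow> min_conv_card D \<rho> X \<le> \<rho> Y + card (X - Y)"
  unfolding min_conv_card_def using finite_lattice by simp

lemma min_conv_card_attained: "\<exists>Y\<in>D. min_conv_card D \<rho> X = \<rho> Y + card (X - Y)"
proof -
  have "min_conv_card D \<rho> X \<in> (\<lambda>Y. \<rho> Y + card (X - Y)) ` D"
    unfolding min_conv_card_def using finite_lattice empty_in_lattice by (intro Min_in) auto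
  then show ?thesis by auto
qed

lemma min_conv_card_eq_rank:
  assumes "X \<in> D"
  shows "min_conv_card D \<rho> X = \<rho> X"
proof (rule antisym)
  show "min_conv_card D \<rho> X \<le> \<rho> X"
    using min_conv_card_le[OF assms, of X] by simp
  obtain Y where "Y \<in> D" "min_conv_card D \<rho> X = \<rho> Y + card (X - Y)"
    using min_conv_card_attained by blast
  moreover have "\<rho> X \<le> \<rho> (Y \<union> X)"
    using assms \<open>Y \<in> D\<close> by (intro rank_mono lattice_Un) auto
  ultimately show "\<rho> X \<le> min_conv_card D \<rho> X"
    using rank_Un_le_card_Diff[OF \<open>Y \<in> D\<close> assms] by simp
qed

lemma min_conv_card_mono:
  assumes "finite B" "A \<subseteq> B"
  shows "min_conv_card D \<rho> A \<le> min_conv_card D \<rho> B"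
proof -
  obtain Y where Y: "Y \<in> D" "min_conv_card D \<rho> B = \<rho> Y + card (B - Y)"
    using min_conv_card_attained by blast
  have "card (A - Y) \<le> card (B - Y)"
    using assms by (intro card_mono) auto
  then show ?thesis
    using min_conv_card_le[OF Y(1), of A] Y(2) by simp
qed

lemma min_conv_card_submodular:
  assumes "finite A" "finite B"
  shows "min_conv_card D \<rho> (A \<union> B) + min_conv_card D \<rho> (A \<inter> B)
    \<le> min_conv_card D \<rho> A + min_conv_card D \<rho> B"
proof -
  obtain Y where Y: "Y \<in> D" "min_conv_card D \<rho> A = \<rho> Y + card (A - Y)"
    using min_conv_card_attained by blast
  obtain Z where Z: "Z \<in> D" "min_conv_card D \<rho> B = \<rho> Z + card (B - Z)"
    using min_conv_card_attained by blast
  have "min_conv_card D \<rho> (A \<union> B) \<le> \<rho> (Y \<union> Z) + card (A \<union> B - (Y \<union> Z))"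
    using Y Z by (intro min_conv_card_le lattice_Un)
  moreover have "min_conv_card D \<rho> (A \<inter> B) \<le> \<rho> (Y \<inter> Z) + card (A \<inter> B - (Y \<inter> Z))"
    using Y Z by (intro min_conv_card_le lattice_Int)
  moreover have "\<rho> (Y \<union> Z) + \<rho> (Y \<inter> Z) \<le> \<rho> Y + \<rho> Z"
    using Y(1) Z(1) by (rule rank_submodular)
  ultimately show ?thesis
    using card_Diff_Un_plus_card_Diff_Int_le[OF assms, of Y Z] Y(2) Z(2) by linarith
qed

lemma min_conv_card_Un_singleton_le:
  assumes "finite A"
  shows "min_conv_card D \<rho> (A \<union> {e}) \<le> min_conv_card D \<rho> A + 1"
proof -
  obtain Y where Y: "Y \<in> D" "min_conv_card D \<rho> A = \<rho> Y + card (A - Y)"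
    using min_conv_card_attained by blast
  have "card (A \<union> {e} - Y) \<le> card (insert e (A - Y))"
    using assms by (intro card_mono) auto
  also have "\<dots> \<le> card (A - Y) + 1"
    using assms by (simp add: card_insert_if)
  finally show ?thesis
    using min_conv_card_le[OF Y(1), of "A \<union> {e}"] Y(2) by simp
qed

lemma U_matroid_min_conv_card:
  assumes "accessible_distributive_lattice E D'"
  shows "U_matroid E D' (min_conv_card D \<rho>)"
proof -
  have finite_member: "finite X" if "X \<in> D'" for X
  proof (rule finite_subset)
    show "X \<subseteq> E" "finite E"
      using assms that unfolding accessible_distributive_lattice_def by auto
  qed
  show ?thesis
    unfolding U_matroid_def
  proof (intro conjI ballI allI impI)
    show "min_conv_card D \<rho> {} = 0"
      using min_conv_card_eq_rank[OF empty_in_lattice] rank_empty by simp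
  next
    fix A B assume "A \<in> D'" "B \<in> D'"
    then show "min_conv_card D \<rho> A + min_conv_card D \<rho> B
        \<ge> min_conv_card D \<rho> (A \<union> B) + min_conv_card D \<rho> (A \<inter> B)"
      using finite_member by (intro min_conv_card_submodular)
  next
    fix A B assume "A \<in> D'" "B \<in> D'" "A \<subseteq> B"
    then show "min_conv_card D \<rho> A \<le> min_conv_card D \<rho> B"
      using finite_member by (intro min_conv_card_mono)
  next
    fix A e assume "A \<in> D'"
    then show "min_conv_card D \<rho> (A \<union> {e}) \<le> min_conv_card D \<rho> A + 1"
      using finite_member by (intro min_conv_card_Un_singleton_le)
  qed (use assms in blast)
qed

lemma generous_atom_ext_insert_le:
  assumes "a \<in> E" "S \<in> D" "insert a S \<notin> D" "Y \<in> D"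
  shows "generous_atom_ext D \<rho> a (insert a S) \<le> \<rho> Y + card (insert a S - Y)"
proof -
  let ?X = "insert a S"
  define M where "M = sup_D D ?X"
  have "a \<notin> S"
    using assms(2,3) by (auto simp: insert_absorb)
  have M: "M \<in> D" "?X \<subseteq> M"
    using sup_D_in_lattice subset_sup_D assms(1,2) lattice_subset_Pow unfolding M_def by auto
  have "\<rho> S \<le> \<rho> M"
    using assms(2) M by (intro rank_mono) auto
  then have upper: "generous_atom_ext D \<rho> a ?X \<le> \<rho> S + 1" "generous_atom_ext D \<rho> a ?X \<le> \<rho> M"
    using assms(3) \<open>a \<notin> S\<close> unfolding generous_atom_ext_def M_def by auto
  have rank_YS: "\<rho> (Y \<union> S) \<le> \<rho> Y + card (S - Y)"
    using assms(4,2) by (rule rank_Un_le_card_Diff)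
  show ?thesis
  proof (cases "a \<in> Y")
    case True
    have "M \<subseteq> Y \<union> S"
      unfolding M_def using assms(2,4) True by (intro sup_D_least lattice_Un) auto
    then have "\<rho> M \<le> \<rho> (Y \<union> S)"
      using M(1) assms(2,4) by (intro rank_mono lattice_Un)
    moreover have "S - Y = ?X - Y"
      using True by auto
    ultimately show ?thesis
      using upper(2) rank_YS by simp
  next
    case False
    have "\<rho> S \<le> \<rho> (Y \<union> S)"
      using assms(2,4) by (intro rank_mono lattice_Un) auto
    moreover have "?X - Y = insert a (S - Y)" "finite (S - Y)"
      using assms(2) finite_lattice_member False by auto
    ultimately show ?thesis
      using upper(1) rank_YS \<open>a \<notin> S\<close> by simp
  qed
qed

lemma generous_atom_ext_insert_attained:
  assumes "a \<in> E" "S \<in> D" "insert a S \<notin> D"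
  shows "\<exists>Y\<in>D. generous_atom_ext D \<rho> a (insert a S) = \<rho> Y + card (insert a S - Y)"
proof -
  let ?X = "insert a S"
  define M where "M = sup_D D ?X"
  have "a \<notin> S"
    using assms(2,3) by (auto simp: insert_absorb)
  then have "?X - {a} = S" "?X - S = {a}"
    by auto
  have "M \<in> D" "?X \<subseteq> M"
    using sup_D_in_lattice subset_sup_D assms(1,2) lattice_subset_Pow unfolding M_def by auto
  then have "card (?X - M) = 0"
    by (metis Diff_eq_empty_iff card.empty)
  show ?thesis
  proof (cases "\<rho> S = \<rho> M")
    case True
    then show ?thesis
      using assms(3) \<open>?X - {a} = S\<close> \<open>M \<in> D\<close> \<open>card (?X - M) = 0\<close>
      unfolding generous_atom_ext_def M_def[symmetric] by (intro bexI[of _ M]) auto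
  next
    case False
    then show ?thesis
      using assms(2,3) \<open>?X - {a} = S\<close> \<open>?X - S = {a}\<close>
      unfolding generous_atom_ext_def M_def[symmetric] by (intro bexI[of _ S]) auto
  qed
qed

lemma generous_atom_ext_eq_min_conv_card:
  assumes "a \<in> E" "X \<in> lattice_add_atom D a"
  shows "generous_atom_ext D \<rho> a X = min_conv_card D \<rho> X"
proof (cases "X \<in> D")
  case True
  then show ?thesis
    by (simp add: generous_atom_ext_def min_conv_card_eq_rank)
next
  case False
  then obtain S where S: "S \<in> D" "X = insert a S"
    using assms(2) unfolding lattice_add_atom_def by auto
  show ?thesis
  proof (rule antisym)
    obtain Y where "Y \<in> D" "min_conv_card D \<rho> X = \<rho> Y + card (X - Y)"
      using min_conv_card_attained by blast
    then show "generous_atom_ext D \<rho> a X \<le> min_conv_card D \<rho> X"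
      using generous_atom_ext_insert_le assms(1) S False by simp
  next
    obtain Y where "Y \<in> D" "generous_atom_ext D \<rho> a X = \<rho> Y + card (X - Y)"
      using generous_atom_ext_insert_attained assms(1) S False by blast
    then show "min_conv_card D \<rho> X \<le> generous_atom_ext D \<rho> a X"
      using min_conv_card_le by simp
  qed
qed

end

theorem theorem4p10:
  fixes E :: "'a set" and D :: "'a set set" and \<rho> :: "'a set \<Rightarrow> nat" and a :: 'a
  assumes "U_matroid E D \<rho>"
    and "a \<in> E"
    and "{a} \<notin> D"
  shows "U_matroid E (lattice_add_atom D a) (generous_atom_ext D \<rho> a)
    \<and> lattice_extension E D \<rho> (lattice_add_atom D a) (generous_atom_ext D \<rho> a)"
proof -
  have "accessible_distributive_lattice E (lattice_add_atom D a)"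
    using assms(1,2) unfolding U_matroid_def by (intro accessible_distributive_lattice_add_atom) auto
  then have "U_matroid E (lattice_add_atom D a) (min_conv_card D \<rho>)"
    by (rule U_matroid_min_conv_card[OF assms(1)])
  then have "U_matroid E (lattice_add_atom D a) (generous_atom_ext D \<rho> a)"
    using generous_atom_ext_eq_min_conv_card[OF assms(1,2)] by (rule U_matroid_cong)
  moreover have "D \<subseteq> lattice_add_atom D a"
    unfolding lattice_add_atom_def by blast
  moreover have "\<forall>A\<in>D. generous_atom_ext D \<rho> a A = \<rho> A"
    by (simp add: generous_atom_ext_def)
  ultimately show ?thesis
    unfolding lattice_extension_def by blast
qed

end
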